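(* Let $a,b,c,d\in\mathbb{C}$ be the vertices, in this order, of a convex quadrilateral, and let $\alpha$ and $\gamma$ be its inner angles at $a$ and $c$. Then \[ p(a,b,c,d)\le\frac{1}{\sin\frac{\alpha+\gamma}{2}}. \]
   Context: For four distinct points $a,b,c,d\in\mathbb{C}$, $p(a,b,c,d)=\frac{|a-b||c-d|+|a-d||b-c|}{|a-c||b-d|}$. *)

theory Defs
  imports "HOL-Analysis.Analysis"
begin

definition p :: "complex \<Rightarrow> complex \<Rightarrow> complex \<Rightarrow> complex \<Rightarrow> real" where
  "p a b c d = (cmod (a - b) * cmod (c - d) + cmod (a - d) * cmod (b - c)) / (cmod (a - c) * cmod (b - d))"

definition cross2 :: "complex \<Rightarrow> complex \<Rightarrow> real" where
  "cross2 z w = Im (cnj z * w)"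

definition convex_quadrilateral :: "complex \<Rightarrow> complex \<Rightarrow> complex \<Rightarrow> complex \<Rightarrow> bool" where
  "convex_quadrilateral a b c d \<longleftrightarrow>
     (cross2 (b - a) (c - b) > 0 \<and> cross2 (c - b) (d - c) > 0 \<and>
      cross2 (d - c) (a - d) > 0 \<and> cross2 (a - d) (b - a) > 0) \<or>
     (cross2 (b - a) (c - b) < 0 \<and> cross2 (c - b) (d - c) < 0 \<and>
      cross2 (d - c) (a - d) < 0 \<and> cross2 (a - d) (b - a) < 0)"

definition vec_angle :: "complex \<Rightarrow> complex \<Rightarrow> real" where
  "vec_angle u v = arccos ((u \<bullet> v) / (cmod u * cmod v))"

definition inner_angle :: "complex \<Rightarrow> complex \<Rightarrow> complex \<Rightarrow> real" where
  "inner_angle y x z = vec_angle (y - x) (z - x)"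

end

theory Submission
  imports Defs
begin

text \<open>Put \<open>u = (a - b)(c - d)\<close> and \<open>v = (a - d)(b - c)\<close>. Then \<open>u + v = (a - c)(b - d)\<close>, so
  \<open>p(a,b,c,d) = (|u| + |v|) / |u + v|\<close>. The argument of \<open>-u * cnj v\<close> is the sum of the oriented angles
  at \<open>a\<close> and \<open>c\<close>; convexity makes these two angles turn the same way, so by the law of cosines
  \<open>|u + v|\<^sup>2 = |u|\<^sup>2 + |v|\<^sup>2 - 2|u||v| cos (\<alpha> + \<gamma>)\<close>, and this is at least
  \<open>(|u| + |v|)\<^sup>2 sin\<^sup>2 ((\<alpha> + \<gamma>)/2)\<close>, the difference being \<open>cos\<^sup>2 ((\<alpha> + \<gamma>)/2) (|u| - |v|)\<^sup>2\<close>.\<close>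

lemma ptolemy_identity:
  fixes a b c d :: "'a :: comm_ring"
  shows "(a - b) * (c - d) + (a - d) * (b - c) = (a - c) * (b - d)"
  by (simp add: algebra_simps)

lemma cos_sin_vec_angle:
  fixes z w :: complex
  assumes "z \<noteq> 0" "w \<noteq> 0"
  shows "cos (vec_angle w z) = Re (z * cnj w) / (cmod z * cmod w)"
    and "sin (vec_angle w z) = \<bar>Im (z * cnj w)\<bar> / (cmod z * cmod w)"
proof -
  define P where "P = z * cnj w"
  have norm_P: "cmod P = cmod z * cmod w" unfolding P_def by (simp add: norm_mult)
  have "cmod P > 0" using assms norm_P by simp
  define k where "k = Re P / cmod P"
  have "w \<bullet> z = Re P" unfolding P_def inner_complex_def by (simp add: algebra_simps)
  then have angle: "vec_angle w z = arccos k"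
    unfolding vec_angle_def k_def norm_P by (simp add: mult.commute)
  have "\<bar>k\<bar> \<le> 1"
    using abs_Re_le_cmod[of P] \<open>cmod P > 0\<close> unfolding k_def abs_divide by simp
  have "1 - k\<^sup>2 = ((cmod P)\<^sup>2 - (Re P)\<^sup>2) / (cmod P)\<^sup>2"
    using \<open>cmod P > 0\<close> unfolding k_def by (simp add: power_divide field_simps)
  also have "\<dots> = (Im P / cmod P)\<^sup>2"
    by (simp add: cmod_power2 power_divide)
  finally have "sqrt (1 - k\<^sup>2) = \<bar>Im P\<bar> / cmod P"
    using \<open>cmod P > 0\<close> by simp
  then show "sin (vec_angle w z) = \<bar>Im (z * cnj w)\<bar> / (cmod z * cmod w)"
    using angle \<open>\<bar>k\<bar> \<le> 1\<close> sin_arccos_abs P_def norm_P by simp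
  have "cos (vec_angle w z) = k"
    using angle \<open>\<bar>k\<bar> \<le> 1\<close> by (simp add: cos_arccos_abs)
  then show "cos (vec_angle w z) = Re (z * cnj w) / (cmod z * cmod w)"
    unfolding k_def P_def norm_P[unfolded P_def] .
qed

lemma vec_angle_gt_0_lt_pi:
  fixes z w :: complex
  assumes "Im (z * cnj w) \<noteq> 0"
  shows "0 < vec_angle w z" "vec_angle w z < pi"
proof -
  have "z \<noteq> 0" "w \<noteq> 0" using assms by auto
  then have "sin (vec_angle w z) > 0"
    using assms cos_sin_vec_angle(2) by simp
  moreover have "\<bar>(w \<bullet> z) / (cmod w * cmod z)\<bar> \<le> 1"
    using Cauchy_Schwarz_ineq2[of w z] \<open>z \<noteq> 0\<close> \<open>w \<noteq> 0\<close> by (simp add: abs_divide divide_le_eq_1)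
  then have "0 \<le> vec_angle w z" "vec_angle w z \<le> pi"
    unfolding vec_angle_def abs_le_iff by (auto intro: arccos_lbound arccos_ubound)
  ultimately show "0 < vec_angle w z" "vec_angle w z < pi"
    by (auto simp: order.order_iff_strict)
qed

lemma cos_add_vec_angle:
  fixes z w z' w' :: complex
  assumes "Im (z * cnj w) * Im (z' * cnj w') > 0"
  shows "cos (vec_angle w z + vec_angle w' z') =
           Re (z * cnj w * (z' * cnj w')) / (cmod z * cmod w * (cmod z' * cmod w'))"
proof -
  define P Q where "P = z * cnj w" and "Q = z' * cnj w'"
  have "z \<noteq> 0" "w \<noteq> 0" "z' \<noteq> 0" "w' \<noteq> 0" using assms by auto
  note angle = cos_sin_vec_angle[OF \<open>z \<noteq> 0\<close> \<open>w \<noteq> 0\<close>, folded P_def]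
    and angle' = cos_sin_vec_angle[OF \<open>z' \<noteq> 0\<close> \<open>w' \<noteq> 0\<close>, folded Q_def]
  have "cos (vec_angle w z + vec_angle w' z') =
          (Re P * Re Q - \<bar>Im P\<bar> * \<bar>Im Q\<bar>) / (cmod z * cmod w * (cmod z' * cmod w'))"
    unfolding cos_add angle angle' by (simp add: diff_divide_distrib)
  also have "\<bar>Im P\<bar> * \<bar>Im Q\<bar> = Im P * Im Q"
    using assms unfolding P_def Q_def by (simp add: abs_mult[symmetric])
  finally show ?thesis unfolding P_def Q_def by simp
qed

lemma norm_add_ge_sin_half:
  fixes u v :: complex and \<theta> :: real
  assumes "Re (u * cnj v) = - (cmod u * cmod v * cos \<theta>)"
  shows "(cmod u + cmod v) * \<bar>sin (\<theta> / 2)\<bar> \<le> cmod (u + v)"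
proof -
  define m n s where "m = cmod u" and "n = cmod v" and "s = sin (\<theta> / 2)"
  have "cos \<theta> = 1 - 2 * s\<^sup>2"
    using cos_double_sin[of "\<theta> / 2"] unfolding s_def by simp
  have "(cmod (u + v))\<^sup>2 = m\<^sup>2 + n\<^sup>2 + 2 * Re (u * cnj v)"
    unfolding m_def n_def cmod_power2 by (simp add: power2_eq_square algebra_simps)
  also have "\<dots> = m\<^sup>2 + n\<^sup>2 - 2 * m * n * (1 - 2 * s\<^sup>2)"
    unfolding assms \<open>cos \<theta> = 1 - 2 * s\<^sup>2\<close> m_def n_def by simp
  finally have "(cmod (u + v))\<^sup>2 - ((m + n) * s)\<^sup>2 = (1 - s\<^sup>2) * (m - n)\<^sup>2"
    by (simp add: power2_eq_square algebra_simps)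
  also have "\<dots> \<ge> 0"
    unfolding s_def using abs_sin_le_one[of "\<theta> / 2"] by (simp add: abs_square_le_1)
  finally have "\<bar>(m + n) * s\<bar> \<le> \<bar>cmod (u + v)\<bar>"
    unfolding abs_le_square_iff by simp
  then show ?thesis unfolding m_def n_def s_def by (simp add: abs_mult)
qed

lemma convex_quadrilateral_opposite_turns:
  assumes "convex_quadrilateral a b c d"
  shows "cross2 (a - d) (b - a) * cross2 (c - b) (d - c) > 0"
  using assms unfolding convex_quadrilateral_def by (auto simp: mult_neg_neg)

lemma convex_quadrilateral_opposite_angles:
  assumes "convex_quadrilateral a b c d"
  shows "0 < inner_angle d a b + inner_angle b c d" "inner_angle d a b + inner_angle b c d < 2 * pi"
    and "Re ((a - b) * (c - d) * cnj ((a - d) * (b - c))) =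
           - (cmod ((a - b) * (c - d)) * cmod ((a - d) * (b - c)) *
              cos (inner_angle d a b + inner_angle b c d))"
proof -
  have turns: "Im ((b - a) * cnj (d - a)) * Im ((d - c) * cnj (b - c)) > 0"
    using convex_quadrilateral_opposite_turns[OF assms]
    unfolding cross2_def by (simp add: algebra_simps)
  then have "Im ((b - a) * cnj (d - a)) \<noteq> 0" "Im ((d - c) * cnj (b - c)) \<noteq> 0"
    by auto
  then show "0 < inner_angle d a b + inner_angle b c d" "inner_angle d a b + inner_angle b c d < 2 * pi"
    using vec_angle_gt_0_lt_pi unfolding inner_angle_def by (smt (verit))+
  have "(a - b) * (c - d) * cnj ((a - d) * (b - c)) = - ((b - a) * cnj (d - a) * ((d - c) * cnj (b - c)))"
    by (simp add: algebra_simps)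
  moreover have "cmod ((a - b) * (c - d)) * cmod ((a - d) * (b - c)) =
                   cmod (b - a) * cmod (d - a) * (cmod (d - c) * cmod (b - c))"
    by (simp add: norm_mult norm_minus_commute)
  moreover have "cmod (b - a) * cmod (d - a) * (cmod (d - c) * cmod (b - c)) \<noteq> 0"
    using turns by auto
  ultimately show "Re ((a - b) * (c - d) * cnj ((a - d) * (b - c))) =
           - (cmod ((a - b) * (c - d)) * cmod ((a - d) * (b - c)) *
              cos (inner_angle d a b + inner_angle b c d))"
    unfolding inner_angle_def cos_add_vec_angle[OF turns] by simp
qed

theorem proposition4p1:
  fixes a b c d :: complex and \<alpha> \<gamma> :: real
  assumes "convex_quadrilateral a b c d"
    and "\<alpha> = inner_angle d a b"
    and "\<gamma> = inner_angle b c d"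
  shows "p a b c d \<le> 1 / sin ((\<alpha> + \<gamma>) / 2)"
proof -
  define u v where "u = (a - b) * (c - d)" and "v = (a - d) * (b - c)"
  note angles = convex_quadrilateral_opposite_angles[OF assms(1), folded assms(2,3) u_def v_def]
  have sin_pos: "sin ((\<alpha> + \<gamma>) / 2) > 0"
    using angles(1,2) by (intro sin_gt_zero) simp_all
  have key: "(cmod u + cmod v) * sin ((\<alpha> + \<gamma>) / 2) \<le> cmod (u + v)"
    using norm_add_ge_sin_half[OF angles(3)] sin_pos by simp
  have p_eq: "p a b c d = (cmod u + cmod v) / cmod (u + v)"
    unfolding p_def u_def v_def ptolemy_identity by (simp add: norm_mult)
  show ?thesis
  proof (cases "u + v = 0")
    case True
    then show ?thesis using p_eq sin_pos by simp
  next
    case False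
    then show ?thesis
      using key sin_pos unfolding p_eq by (simp add: field_simps)
  qed
qed

end
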